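(* Let $h\ge1$ be real. There is a unique sequence of positive real numbers $(r_n)_{n\ge1}$ satisfying $$r_n=hn-1+\frac{n^2}{r_{n+1}}\qquad\text{for all } n\ge1.$$ Moreover, this sequence satisfies, for all $n\ge1$, $$0<r_n-\alpha n+c<\frac{(\alpha-c)(c-1)}{\alpha n},$$ where $\alpha=\dfrac{h+\sqrt{h^2+4}}{2}$ and $c=\dfrac{1+\alpha}{2\alpha-h}=\dfrac12+\dfrac{h+2}{2\sqrt{h^2+4}}$. *)

theory Defs
  imports Complex_Main
begin

end

theory Submission
  imports Defs
begin

text \<open>With \<open>\<alpha>\<^sup>2 = h \<alpha> + 1\<close> and \<open>\<alpha> - c = \<alpha>\<^sup>2 (c - 1)\<close>, the map \<open>x \<mapsto> h n - 1 + n\<^sup>2 / x\<close> sends the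
  window \<open>[\<alpha> m - c, \<alpha> m - c + \<alpha> (c - 1)\<^sup>2 / m]\<close> for \<open>m = n + 1\<close> strictly into the window for
  \<open>m = n\<close>, and on these windows it contracts distances by the factor \<open>1 / \<alpha>\<close>. Hence the finite
  truncations of the continued fraction converge geometrically to a solution lying in the open
  windows. A second positive solution \<open>s\<close> satisfies \<open>s (n + 1) > n\<close>, which still gives the
  contraction, and \<open>s n < (h + 1) n\<close>; iterating \<open>m\<close> times bounds the difference at \<open>n\<close> by
  \<open>O((n + m) / \<alpha>\<^sup>m)\<close>, so it vanishes.\<close>

definition positive_solution :: "real \<Rightarrow> (nat \<Rightarrow> real) \<Rightarrow> bool" where
  "positive_solution h s \<longleftrightarrow>
     (\<forall>n\<ge>1. s n > 0 \<and> s n = h * real n - 1 + (real n)\<^sup>2 / s (n + 1))"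

lemma abs_diff_square_div_le:
  fixes a n x y :: real
  assumes "a > 0" "n > 0" "x \<ge> a * n" "y \<ge> n"
  shows "\<bar>n\<^sup>2 / x - n\<^sup>2 / y\<bar> \<le> \<bar>x - y\<bar> / a"
proof -
  have x: "x > 0" and y: "y > 0"
    using assms by (auto intro: less_le_trans[of 0 "a * n"])
  have "a * n * n \<le> x * y"
    using assms x by (intro mult_mono) auto
  then have "n\<^sup>2 / (x * y) \<le> 1 / a"
    using x y \<open>a > 0\<close> by (simp add: field_simps power2_eq_square)
  then have "n\<^sup>2 / (x * y) * \<bar>x - y\<bar> \<le> \<bar>x - y\<bar> / a"
    using mult_right_mono[of _ _ "\<bar>x - y\<bar>"] by fastforce
  moreover have "n\<^sup>2 / x - n\<^sup>2 / y = n\<^sup>2 / (x * y) * (y - x)"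
    using x y by (simp add: field_simps)
  then have "\<bar>n\<^sup>2 / x - n\<^sup>2 / y\<bar> = n\<^sup>2 / (x * y) * \<bar>x - y\<bar>"
    using x y by (simp add: abs_mult abs_minus_commute)
  ultimately show ?thesis
    by simp
qed

lemma convergent_if_geometric_steps:
  fixes f :: "nat \<Rightarrow> 'a::banach"
  assumes "0 \<le> q" "q < 1" "\<And>m. norm (f (Suc m) - f m) \<le> C * q ^ m"
  shows "convergent f"
proof -
  have "summable (\<lambda>m. f (Suc m) - f m)"
    using assms by (intro summable_comparison_test[OF _ summable_mult[OF summable_geometric]]) auto
  then have "convergent (\<lambda>m. (\<Sum>k<m. f (Suc k) - f k) + f 0)"
    by (intro convergent_add convergent_const) (simp add: summable_iff_convergent)
  then show ?thesis
    by (simp add: sum_lessThan_telescope)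
qed

lemma zero_if_contracting_linear_growth:
  fixes d :: "nat \<Rightarrow> real"
  assumes "a > 1"
    and contract: "\<And>k. k \<ge> 1 \<Longrightarrow> \<bar>d k\<bar> \<le> \<bar>d (Suc k)\<bar> / a"
    and growth: "\<And>k. k \<ge> 1 \<Longrightarrow> \<bar>d k\<bar> \<le> K * real k"
    and "n \<ge> 1"
  shows "d n = 0"
proof -
  have iter: "\<bar>d k\<bar> \<le> K * real (k + m) / a ^ m" if "k \<ge> 1" for k m
    using that
  proof (induction m arbitrary: k)
    case 0
    then show ?case using growth by simp
  next
    case (Suc m)
    have "\<bar>d k\<bar> \<le> \<bar>d (Suc k)\<bar> / a" using contract[OF Suc.prems] .
    also have "\<dots> \<le> (K * real (Suc k + m) / a ^ m) / a"
      using Suc.IH[of "Suc k"] \<open>a > 1\<close> by (intro divide_right_mono) auto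
    finally show ?case by (simp add: field_simps)
  qed
  have "(\<lambda>m. K * real n * (1/a) ^ m + K * (real m * (1/a) ^ m)) \<longlonglongrightarrow> K * real n * 0 + K * 0"
    using \<open>a > 1\<close> by (intro tendsto_intros LIMSEQ_power_zero powser_times_n_limit_0) auto
  moreover have "\<bar>d n\<bar> \<le> K * real n * (1/a) ^ m + K * (real m * (1/a) ^ m)" for m
    using iter[OF \<open>n \<ge> 1\<close>, of m] by (simp add: field_simps add_divide_distrib)
  ultimately have "\<bar>d n\<bar> \<le> 0"
    by (intro LIMSEQ_le_const) auto
  then show ?thesis by simp
qed

lemma positive_solution_bounds:
  assumes "h \<ge> 1" "positive_solution h s" "k \<ge> 1"
  shows positive_solution_Suc_gt: "real k < s (Suc k)"
    and positive_solution_lt: "s k < (h + 1) * real k"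
proof -
  have pos: "s n > 0" and rec: "s n = h * real n - 1 + (real n)\<^sup>2 / s (Suc n)" if "n \<ge> 1" for n
    using assms(2) that unfolding positive_solution_def Suc_eq_plus1 by blast+
  have "(real (Suc k))\<^sup>2 / s (Suc (Suc k)) > 0"
    using pos[of "Suc (Suc k)"] by simp
  moreover have "real (Suc k) \<le> h * real (Suc k)"
    using mult_right_mono[OF \<open>h \<ge> 1\<close>, of "real (Suc k)"] by simp
  moreover have "s (Suc k) = h * real (Suc k) - 1 + (real (Suc k))\<^sup>2 / s (Suc (Suc k))"
    by (rule rec) simp
  moreover have "real (Suc k) = real k + 1"
    by simp
  ultimately show gt: "real k < s (Suc k)"
    by linarith
  have "(real k)\<^sup>2 / s (Suc k) < (real k)\<^sup>2 / real k"
    using gt \<open>k \<ge> 1\<close> by (intro divide_strict_left_mono) auto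
  also have "\<dots> = real k"
    by (simp add: power2_eq_square)
  finally show "s k < (h + 1) * real k"
    using rec[OF \<open>k \<ge> 1\<close>] by (simp add: algebra_simps)
qed

locale cf_recurrence =
  fixes h a c :: real
  assumes a_gt_1: "a > 1" and h_eq: "h = a - 1 / a" and a_minus_c: "a - c = a\<^sup>2 * (c - 1)"
begin

lemma c_gt_1: "c > 1"
proof -
  have "(c - 1) * (1 + a\<^sup>2) = a - 1"
    using a_minus_c by (simp add: algebra_simps)
  then have "(c - 1) * (1 + a\<^sup>2) > 0"
    using a_gt_1 by simp
  moreover have "1 + a\<^sup>2 > 0"
    by (simp add: add_pos_nonneg)
  ultimately show ?thesis
    by (simp add: zero_less_mult_iff)
qed

lemma a_gt_c: "a > c"
proof -
  have "a\<^sup>2 * (c - 1) > 0"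
    using a_gt_1 c_gt_1 by simp
  then show ?thesis
    using a_minus_c by linarith
qed

lemma lower_Suc_gt: "a * x < a * (x + 1) - c"
  using a_gt_c by (simp add: algebra_simps)

lemma lower_Suc_pos:
  assumes "x \<ge> 0"
  shows "a * (x + 1) - c > 0"
proof -
  have "a * x \<ge> 0"
    using a_gt_1 assms by simp
  then show ?thesis
    using lower_Suc_gt[of x] by linarith
qed

lemma step_offset: "h * n - 1 - (a * n - c) = (c - 1) - n / a"
  using a_gt_1 unfolding h_eq by (simp add: field_simps)

lemma step_lt_upper:
  fixes n x :: real
  assumes "n \<ge> 1" "a * (n + 1) - c \<le> x"
  shows "h * n - 1 + n\<^sup>2 / x < a * n - c + a * (c - 1)\<^sup>2 / n"
proof -
  define e where "e = c - 1"
  have e: "e > 0" "a * (n + 1) - c = a * n + a\<^sup>2 * e"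
    using a_minus_c c_gt_1 by (auto simp: e_def algebra_simps)
  have pos: "a * n + a\<^sup>2 * e > 0"
    using a_gt_1 e \<open>n \<ge> 1\<close> by (simp add: add_pos_pos)
  have "n\<^sup>2 / x \<le> n\<^sup>2 / (a * n + a\<^sup>2 * e)"
    using assms e pos by (intro divide_left_mono) auto
  moreover have "e - n / a + n\<^sup>2 / (a * n + a\<^sup>2 * e) = a * e\<^sup>2 / (n + a * e)"
  proof -
    have "n + a * e > 0" "a * n + a * (a * e) > 0"
      using a_gt_1 e \<open>n \<ge> 1\<close> by (simp_all add: add_pos_pos)
    then show ?thesis
      using a_gt_1 by (simp add: field_simps power2_eq_square)
  qed
  moreover have "a * e\<^sup>2 / (n + a * e) < a * e\<^sup>2 / n"
    using a_gt_1 e \<open>n \<ge> 1\<close> by (intro divide_strict_left_mono mult_pos_pos add_pos_pos) auto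
  ultimately show ?thesis
    using step_offset[of n] unfolding e_def by linarith
qed

lemma step_gt_lower:
  fixes n x :: real
  assumes "n \<ge> 1" "a * (n + 1) - c \<le> x" "x \<le> a * (n + 1) - c + a * (c - 1)\<^sup>2 / (n + 1)"
  shows "a * n - c < h * n - 1 + n\<^sup>2 / x"
proof -
  define e where "e = c - 1"
  define U where "U = a * n + a\<^sup>2 * e + a * e\<^sup>2 / (n + 1)"
  have e: "e > 0" "a * (n + 1) - c = a * n + a\<^sup>2 * e"
    using a_minus_c c_gt_1 by (auto simp: e_def algebra_simps)
  have U: "U > 0" "x \<le> U"
    using assms a_gt_1 e unfolding U_def e_def by (auto intro!: add_pos_nonneg)
  have "x > 0"
    using lower_Suc_pos[of n] assms by linarith
  have "n\<^sup>2 - (n / a - e) * U = a\<^sup>2 * e\<^sup>2 - (n / a - e) * (a * e\<^sup>2) / (n + 1)"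
  proof -
    have "n + 1 > 0" "a + a * n > 0"
      using a_gt_1 \<open>n \<ge> 1\<close> by (simp_all add: add_pos_pos)
    then show ?thesis
      using a_gt_1 unfolding U_def by (simp add: field_simps power2_eq_square)
  qed
  moreover have "(n / a - e) * (a * e\<^sup>2) / (n + 1) < e\<^sup>2"
  proof -
    have "(n / a - e) * (a * e\<^sup>2) / (n + 1) \<le> (n / a) * (a * e\<^sup>2) / (n + 1)"
      using e a_gt_1 \<open>n \<ge> 1\<close> by (intro divide_right_mono mult_right_mono) auto
    also have "\<dots> = e\<^sup>2 * (n / (n + 1))"
      using a_gt_1 \<open>n \<ge> 1\<close> by (simp add: field_simps)
    also have "\<dots> < e\<^sup>2 * 1"
      using e \<open>n \<ge> 1\<close> by (intro mult_strict_left_mono) auto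
    finally show ?thesis by simp
  qed
  moreover have "1 * e\<^sup>2 \<le> a\<^sup>2 * e\<^sup>2"
    using a_gt_1 by (intro mult_right_mono one_le_power) auto
  ultimately have "n / a - e < n\<^sup>2 / U"
    using U by (simp add: field_simps)
  also have "n\<^sup>2 / U \<le> n\<^sup>2 / x"
    using U \<open>x > 0\<close> by (intro divide_left_mono) auto
  finally show ?thesis
    using step_offset[of n] unfolding e_def by linarith
qed

lemma step_in_window:
  assumes "n \<ge> 1"
    and "a * real (Suc n) - c \<le> x" "x \<le> a * real (Suc n) - c + a * (c - 1)\<^sup>2 / real (Suc n)"
  shows "a * real n - c < h * real n - 1 + (real n)\<^sup>2 / x"
    and "h * real n - 1 + (real n)\<^sup>2 / x < a * real n - c + a * (c - 1)\<^sup>2 / real n"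
  using assms step_gt_lower[of "real n" x] step_lt_upper[of "real n" x] by (simp_all add: add.commute)

text \<open>The \<open>m\<close>-th approximant truncates the continued fraction after \<open>m\<close> levels, replacing
  the tail \<open>r (n + m)\<close> by the lower end of its window.\<close>

fun approx :: "nat \<Rightarrow> nat \<Rightarrow> real" where
  "approx 0 n = a * real n - c"
| "approx (Suc m) n = h * real n - 1 + (real n)\<^sup>2 / approx m (Suc n)"

lemma approx_in_window:
  assumes "n \<ge> 1"
  shows "a * real n - c \<le> approx m n \<and> approx m n \<le> a * real n - c + a * (c - 1)\<^sup>2 / real n"
  using assms
proof (induction m arbitrary: n)
  case 0
  then show ?case
    using a_gt_1 by simp
next
  case (Suc m)
  then show ?case
    using Suc.IH[of "Suc n"] step_in_window[of n "approx m (Suc n)"] by fastforce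
qed

lemma approx_Suc_ge: "n \<ge> 1 \<Longrightarrow> a * real n \<le> approx m (Suc n)"
  using approx_in_window[of "Suc n" m] lower_Suc_gt[of "real n"] by (simp add: add.commute)

lemma approx_dist_Suc:
  assumes "n \<ge> 1"
  shows "\<bar>approx (Suc m) n - approx m n\<bar> \<le> a * (c - 1)\<^sup>2 / a ^ m"
  using assms
proof (induction m arbitrary: n)
  case 0
  have "a * (c - 1)\<^sup>2 / real n \<le> a * (c - 1)\<^sup>2 / 1"
    using 0 a_gt_1 by (intro divide_left_mono) auto
  then show ?case
    using approx_in_window[OF 0, of 0] approx_in_window[OF 0, of 1] unfolding abs_le_iff
    by (simp del: approx.simps)
next
  case (Suc m)
  let ?x = "approx (Suc m) (Suc n)" and ?y = "approx m (Suc n)"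
  have x: "a * real n \<le> ?x" and "a * real n \<le> ?y"
    using approx_Suc_ge[OF Suc.prems] by blast+
  moreover have "1 * real n \<le> a * real n"
    using a_gt_1 by (intro mult_right_mono) auto
  ultimately have y: "real n \<le> ?y"
    by linarith
  have "\<bar>(real n)\<^sup>2 / ?x - (real n)\<^sup>2 / ?y\<bar> \<le> \<bar>?x - ?y\<bar> / a"
    using Suc.prems a_gt_1 by (intro abs_diff_square_div_le[OF _ _ x y]) auto
  also have "\<dots> \<le> (a * (c - 1)\<^sup>2 / a ^ m) / a"
    using Suc.IH[of "Suc n"] a_gt_1 by (intro divide_right_mono) auto
  finally show ?case by simp
qed

lemma convergent_approx:
  assumes "n \<ge> 1"
  shows "convergent (\<lambda>m. approx m n)"
proof (rule convergent_if_geometric_steps)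
  show "0 \<le> 1 / a" "1 / a < 1"
    using a_gt_1 by auto
  show "norm (approx (Suc m) n - approx m n) \<le> a * (c - 1)\<^sup>2 * (1 / a) ^ m" for m
    using approx_dist_Suc[OF assms, of m] by (simp add: power_one_over del: approx.simps)
qed

definition r :: "nat \<Rightarrow> real" where
  "r n = lim (\<lambda>m. approx m n)"

lemma approx_LIMSEQ: "n \<ge> 1 \<Longrightarrow> (\<lambda>m. approx m n) \<longlonglongrightarrow> r n"
  unfolding r_def using convergent_approx convergent_LIMSEQ_iff by blast

lemma r_in_window:
  assumes "n \<ge> 1"
  shows "a * real n - c \<le> r n" "r n \<le> a * real n - c + a * (c - 1)\<^sup>2 / real n"
  using approx_in_window[OF assms]
  by (auto intro: LIMSEQ_le_const[OF approx_LIMSEQ[OF assms]] LIMSEQ_le_const2[OF approx_LIMSEQ[OF assms]])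

lemma r_recurrence:
  assumes "n \<ge> 1"
  shows "r n = h * real n - 1 + (real n)\<^sup>2 / r (Suc n)"
proof -
  have "r (Suc n) > 0"
    using r_in_window(1)[of "Suc n"] lower_Suc_pos[of "real n"] by (simp add: add.commute)
  then have "(\<lambda>m. approx (Suc m) n) \<longlonglongrightarrow> h * real n - 1 + (real n)\<^sup>2 / r (Suc n)"
    unfolding approx.simps by (intro tendsto_intros approx_LIMSEQ) auto
  moreover have "(\<lambda>m. approx (Suc m) n) \<longlonglongrightarrow> r n"
    using LIMSEQ_Suc[OF approx_LIMSEQ[OF assms]] .
  ultimately show ?thesis
    using LIMSEQ_unique by blast
qed

lemma r_in_open_window:
  assumes "n \<ge> 1"
  shows "a * real n - c < r n" "r n < a * real n - c + a * (c - 1)\<^sup>2 / real n"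
  using step_in_window[OF assms r_in_window[of "Suc n"]] unfolding r_recurrence[OF assms, symmetric]
  by simp_all

lemma r_pos: "n \<ge> 1 \<Longrightarrow> r n > 0"
  using r_in_open_window(1)[of n] lower_Suc_pos[of "real n - 1"] by simp

lemma positive_solution_r: "positive_solution h r"
  unfolding positive_solution_def Suc_eq_plus1[symmetric] using r_pos r_recurrence by blast

lemma r_unique:
  assumes "h \<ge> 1" "positive_solution h s" "n \<ge> 1"
  shows "s n = r n"
proof -
  have s_rec: "s k = h * real k - 1 + (real k)\<^sup>2 / s (Suc k)" and s_pos: "s k > 0"
    if "k \<ge> 1" for k
    using assms(2) that unfolding positive_solution_def Suc_eq_plus1 by blast+
  have "(\<lambda>k. s k - r k) n = 0"
  proof (rule zero_if_contracting_linear_growth[where K = "h + 1 + a + a * (c - 1)\<^sup>2"])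
    show "a > 1"
      using a_gt_1 .
    show "n \<ge> 1"
      using assms(3) .
    show "\<bar>s k - r k\<bar> \<le> \<bar>s (Suc k) - r (Suc k)\<bar> / a" if k: "k \<ge> 1" for k
    proof -
      have "a * real k \<le> r (Suc k)"
        using r_in_window(1)[of "Suc k"] lower_Suc_gt[of "real k"] by (simp add: add.commute)
      then have "\<bar>(real k)\<^sup>2 / r (Suc k) - (real k)\<^sup>2 / s (Suc k)\<bar> \<le> \<bar>r (Suc k) - s (Suc k)\<bar> / a"
        using a_gt_1 k positive_solution_Suc_gt[OF assms(1,2) k]
        by (intro abs_diff_square_div_le) auto
      then show ?thesis
        using s_rec[OF k] r_recurrence[OF k] by (simp add: abs_minus_commute)
    qed
    show "\<bar>s k - r k\<bar> \<le> (h + 1 + a + a * (c - 1)\<^sup>2) * real k" if k: "k \<ge> 1" for k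
    proof -
      have "a * (c - 1)\<^sup>2 / real k \<le> a * (c - 1)\<^sup>2 / 1"
        using a_gt_1 k by (intro divide_left_mono) auto
      also have "\<dots> \<le> a * (c - 1)\<^sup>2 * real k"
        using a_gt_1 k mult_left_mono[of 1 "real k" "a * (c - 1)\<^sup>2"] by simp
      finally have "r k \<le> a * real k + a * (c - 1)\<^sup>2 * real k"
        using r_in_window(2)[OF k] c_gt_1 by linarith
      moreover have "s k < (h + 1) * real k"
        using positive_solution_lt[OF assms(1,2) k] .
      moreover have "\<bar>s k - r k\<bar> \<le> s k + r k"
        using s_pos[OF k] r_pos[OF k] by linarith
      moreover have "(h + 1 + a + a * (c - 1)\<^sup>2) * real k
          = (h + 1) * real k + (a * real k + a * (c - 1)\<^sup>2 * real k)"
        by (simp add: algebra_simps)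
      ultimately show ?thesis
        by linarith
    qed
  qed
  then show ?thesis
    by simp
qed

lemma window_width_eq: "a * (c - 1)\<^sup>2 / x = (a - c) * (c - 1) / (a * x)"
  using a_gt_1 by (simp add: a_minus_c power2_eq_square)

end

lemma cf_recurrence_sqrt_parameters:
  fixes h :: real
  assumes "h > 0"
  defines "\<alpha> \<equiv> (h + sqrt (h\<^sup>2 + 4)) / 2"
  defines "c \<equiv> (1 + \<alpha>) / (2 * \<alpha> - h)"
  shows "cf_recurrence h \<alpha> c" and "c = 1/2 + (h + 2) / (2 * sqrt (h\<^sup>2 + 4))"
proof -
  define S where "S = sqrt (h\<^sup>2 + 4)"
  have S_sq: "S\<^sup>2 = h\<^sup>2 + 4"
    unfolding S_def by simp
  have "2 < S"
    unfolding S_def using \<open>h > 0\<close> by (intro real_less_rsqrt) simp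
  moreover have alpha: "\<alpha> = (h + S) / 2"
    unfolding \<alpha>_def S_def ..
  ultimately have S: "2 < S" "2 * \<alpha> - h = S" "\<alpha> > 1"
    using \<open>h > 0\<close> by auto
  have alpha_sq: "\<alpha>\<^sup>2 = h * \<alpha> + 1"
    using S_sq unfolding alpha by (simp add: field_simps power2_eq_square)
  have c: "c = (1 + \<alpha>) / S"
    unfolding c_def S(2) ..
  show "c = 1/2 + (h + 2) / (2 * sqrt (h\<^sup>2 + 4))"
    using S unfolding c alpha S_def[symmetric] by (simp add: field_simps)
  show "cf_recurrence h \<alpha> c"
  proof
    show "\<alpha> > 1"
      using S(3) .
    show "h = \<alpha> - 1 / \<alpha>"
      using alpha_sq S(3) by (simp add: field_simps power2_eq_square)
    have "\<alpha> * S = 2 * \<alpha>\<^sup>2 - h * \<alpha>"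
      unfolding S(2)[symmetric] by (simp add: algebra_simps power2_eq_square)
    also have "\<dots> = \<alpha>\<^sup>2 + 1"
      using alpha_sq by linarith
    finally show "\<alpha> - c = \<alpha>\<^sup>2 * (c - 1)"
      using S unfolding c by (simp add: field_simps power2_eq_square)
  qed
qed

theorem lemma3:
  fixes h :: real
  assumes "h \<ge> 1"
  defines "\<alpha> \<equiv> (h + sqrt (h\<^sup>2 + 4)) / 2"
  defines "c \<equiv> (1 + \<alpha>) / (2 * \<alpha> - h)"
  shows "c = 1/2 + (h + 2) / (2 * sqrt (h\<^sup>2 + 4))
    \<and> (\<exists>r :: nat \<Rightarrow> real.
        (\<forall>n\<ge>1. r n > 0 \<and> r n = h * real n - 1 + (real n)\<^sup>2 / r (n + 1))
      \<and> (\<forall>s :: nat \<Rightarrow> real.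
            (\<forall>n\<ge>1. s n > 0 \<and> s n = h * real n - 1 + (real n)\<^sup>2 / s (n + 1))
            \<longrightarrow> (\<forall>n\<ge>1. s n = r n))
      \<and> (\<forall>n\<ge>1. 0 < r n - \<alpha> * real n + c
              \<and> r n - \<alpha> * real n + c < (\<alpha> - c) * (c - 1) / (\<alpha> * real n)))"
proof -
  have "h > 0"
    using assms(1) by simp
  then interpret cf_recurrence h \<alpha> c
    unfolding \<alpha>_def c_def by (rule cf_recurrence_sqrt_parameters)
  show ?thesis
  proof (intro conjI exI[of _ r])
    show "c = 1/2 + (h + 2) / (2 * sqrt (h\<^sup>2 + 4))"
      unfolding c_def \<alpha>_def using \<open>h > 0\<close> by (rule cf_recurrence_sqrt_parameters)
    show "\<forall>n\<ge>1. r n > 0 \<and> r n = h * real n - 1 + (real n)\<^sup>2 / r (n + 1)"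
      using positive_solution_r unfolding positive_solution_def .
    show "\<forall>s. (\<forall>n\<ge>1. s n > 0 \<and> s n = h * real n - 1 + (real n)\<^sup>2 / s (n + 1))
        \<longrightarrow> (\<forall>n\<ge>1. s n = r n)"
      using r_unique[OF assms(1)] unfolding positive_solution_def by blast
    show "\<forall>n\<ge>1. 0 < r n - \<alpha> * real n + c
        \<and> r n - \<alpha> * real n + c < (\<alpha> - c) * (c - 1) / (\<alpha> * real n)"
      using r_in_open_window unfolding window_width_eq by fastforce
  qed
qed

end
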